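(* Let $\mathfrak g$ be a right Leibniz algebra with bracket $[\,,]$ and let $R$ be a left Leibniz dual algebra with product $(r,s)\mapsto rs$, over a common field. Then the tensor product $\mathfrak g\otimes R$ with multiplication $(x\otimes r)\circ(y\otimes s)=[x,y]\otimes rs$ is a right-symmetric algebra.
   Context: A right Leibniz algebra satisfies $[a,[b,c]]-[[a,b],c]+[[a,c],b]=0$. A left Leibniz dual algebra satisfies $(rs)t=r(st+ts)$. An algebra is right-symmetric if $X\circ(Y\circ Z)-(X\circ Y)\circ Z=X\circ(Z\circ Y)-(X\circ Z)\circ Y$ for all $X,Y,Z$. *)

theory Defs
  imports Complex_Main
begin

definition bilinear_map ::
  "('k::field \<Rightarrow> 'a::ab_group_add \<Rightarrow> 'a) \<Rightarrow> ('k \<Rightarrow> 'b::ab_group_add \<Rightarrow> 'b)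
   \<Rightarrow> ('k \<Rightarrow> 'c::ab_group_add \<Rightarrow> 'c) \<Rightarrow> ('a \<Rightarrow> 'b \<Rightarrow> 'c) \<Rightarrow> bool" where
  "bilinear_map sa sb sc f \<longleftrightarrow>
     (\<forall>y. Vector_Spaces.linear sa sc (\<lambda>x. f x y)) \<and>
     (\<forall>x. Vector_Spaces.linear sb sc (\<lambda>y. f x y))"

definition right_leibniz_algebra ::
  "('k::field \<Rightarrow> 'g::ab_group_add \<Rightarrow> 'g) \<Rightarrow> ('g \<Rightarrow> 'g \<Rightarrow> 'g) \<Rightarrow> bool" where
  "right_leibniz_algebra sg br \<longleftrightarrow> vector_space sg \<and> bilinear_map sg sg sg br \<and>
     (\<forall>a b c. br a (br b c) - br (br a b) c + br (br a c) b = 0)"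

definition left_leibniz_dual_algebra ::
  "('k::field \<Rightarrow> 'r::ab_group_add \<Rightarrow> 'r) \<Rightarrow> ('r \<Rightarrow> 'r \<Rightarrow> 'r) \<Rightarrow> bool" where
  "left_leibniz_dual_algebra sr m \<longleftrightarrow> vector_space sr \<and> bilinear_map sr sr sr m \<and>
     (\<forall>r s t. m (m r s) t = m r (m s t + m t s))"

definition right_symmetric :: "('t \<Rightarrow> 't \<Rightarrow> 't::ab_group_add) \<Rightarrow> bool" where
  "right_symmetric p \<longleftrightarrow>
     (\<forall>X Y Z. p X (p Y Z) - p (p X Y) Z = p X (p Z Y) - p (p X Z) Y)"

text \<open>(T, tp) is a tensor product of the vector spaces G and R over 'k: tp is bilinear,
its image spans T, and every bilinear form on G x R factors uniquely through a linear
functional on T. (For vector spaces over a field, the universal property with respect to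
scalar-valued bilinear maps is equivalent to the full universal property.)\<close>
definition is_tensor_product ::
  "('k::field \<Rightarrow> 'g::ab_group_add \<Rightarrow> 'g) \<Rightarrow> ('k \<Rightarrow> 'r::ab_group_add \<Rightarrow> 'r)
   \<Rightarrow> ('k \<Rightarrow> 't::ab_group_add \<Rightarrow> 't) \<Rightarrow> ('g \<Rightarrow> 'r \<Rightarrow> 't) \<Rightarrow> bool" where
  "is_tensor_product sg sr st tp \<longleftrightarrow>
     vector_space sg \<and> vector_space sr \<and> vector_space st \<and>
     bilinear_map sg sr st tp \<and>
     module.span st (range (\<lambda>(x, y). tp x y)) = UNIV \<and>
     (\<forall>f :: 'g \<Rightarrow> 'r \<Rightarrow> 'k. bilinear_map sg sr (*) f \<longrightarrow>
        (\<exists>!h. Vector_Spaces.linear st (*) h \<and> (\<forall>x y. h (tp x y) = f x y)))"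

end

theory Submission
  imports Defs
begin

text \<open>The right-symmetry defect of \<open>\<circ>\<close> is trilinear, so it suffices that it vanishes on pure
tensors, which span \<open>\<frak>g \<otimes> R\<close>. Put \<open>u = r(st)\<close> and \<open>v = r(ts)\<close>; the dual identity gives
\<open>(rs)t = u + v\<close> and \<open>(rt)s = v + u\<close>. Collecting the \<open>u\<close>- and \<open>v\<close>-components, the defect
on \<open>x \<otimes> r, y \<otimes> s, z \<otimes> t\<close> becomes \<open>L(x,y,z) \<otimes> u - L(x,z,y) \<otimes> v\<close>, where
\<open>L(a,b,c) = [a,[b,c]] - [[a,b],c] + [[a,c],b]\<close> vanishes by the Leibniz identity.\<close>

definition right_symmetry_defect :: "('t \<Rightarrow> 't \<Rightarrow> 't::ab_group_add) \<Rightarrow> 't \<Rightarrow> 't \<Rightarrow> 't \<Rightarrow> 't" where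
  "right_symmetry_defect p X Y Z =
     (p X (p Y Z) - p (p X Y) Z) - (p X (p Z Y) - p (p X Z) Y)"

lemma right_symmetric_iff_defect_eq_0:
  "right_symmetric p \<longleftrightarrow> (\<forall>X Y Z. right_symmetry_defect p X Y Z = 0)"
  unfolding right_symmetric_def right_symmetry_defect_def by simp

definition trilinear_map :: "('k::field \<Rightarrow> 'a::ab_group_add \<Rightarrow> 'a) \<Rightarrow> ('a \<Rightarrow> 'a \<Rightarrow> 'a \<Rightarrow> 'a) \<Rightarrow> bool" where
  "trilinear_map s F \<longleftrightarrow>
     (\<forall>Y Z. module_hom s s (\<lambda>X. F X Y Z)) \<and>
     (\<forall>X Z. module_hom s s (\<lambda>Y. F X Y Z)) \<and>
     (\<forall>X Y. module_hom s s (\<lambda>Z. F X Y Z))"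

lemma trilinear_map_eq_0_on_span:
  assumes F: "trilinear_map s F" and S: "module.span s S = UNIV"
    and F0: "\<And>x y z. x \<in> S \<Longrightarrow> y \<in> S \<Longrightarrow> z \<in> S \<Longrightarrow> F x y z = 0"
  shows "F X Y Z = 0"
proof -
  have hom1: "module_hom s s (\<lambda>X. F X Y Z)"
    and hom2: "module_hom s s (\<lambda>Y. F X Y Z)"
    and hom3: "module_hom s s (\<lambda>Z. F X Y Z)" for X Y Z
    using F unfolding trilinear_map_def by blast+
  have "F X y z = 0" if "y \<in> S" "z \<in> S" for X y z
    by (rule module_hom.eq_0_on_span[OF hom1, where b = S]) (use F0 that S in auto)
  then have "F X Y z = 0" if "z \<in> S" for X Y z
    by (rule module_hom.eq_0_on_span[OF hom2, where b = S]) (use that S in auto)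
  then show ?thesis
    by (rule module_hom.eq_0_on_span[OF hom3, where b = S]) (use S in auto)
qed

lemma bilinear_map_module_hom:
  assumes "bilinear_map sa sb sc f"
  shows "module_hom sa sc (\<lambda>x. f x y)" and "module_hom sb sc (f x)"
  using assms unfolding bilinear_map_def by (simp_all add: module_hom_iff_linear)

lemma trilinear_map_right_symmetry_defect:
  assumes "bilinear_map s s s p"
  shows "trilinear_map s (right_symmetry_defect p)"
proof -
  note left = bilinear_map_module_hom(1)[OF assms] and right = bilinear_map_module_hom(2)[OF assms]
  have comp: "module_hom s s (\<lambda>x. p (p x a) b)" "module_hom s s (\<lambda>x. p (p a x) b)"
    "module_hom s s (\<lambda>x. p a (p x b))" "module_hom s s (\<lambda>x. p a (p b x))" for a b
    using module_hom_compose[OF left left] module_hom_compose[OF right left]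
      module_hom_compose[OF left right] module_hom_compose[OF right right]
    by (simp_all add: comp_def)
  have "module_pair s s"
    using left[of 0] unfolding module_pair_def module_hom_iff by blast
  show ?thesis
    unfolding trilinear_map_def right_symmetry_defect_def
    by (intro conjI allI module_pair.module_hom_sub[OF \<open>module_pair s s\<close>] left right comp)
qed

lemma right_symmetry_defect_pure_tensors_eq_0:
  assumes br: "right_leibniz_algebra sg br"
    and m: "left_leibniz_dual_algebra sr m"
    and tp: "bilinear_map sg sr st tp"
    and circ: "\<And>x r y s. circ (tp x r) (tp y s) = tp (br x y) (m r s)"
  shows "right_symmetry_defect circ (tp x r) (tp y s) (tp z t) = 0"
proof -
  let ?u = "m r (m s t)" and ?v = "m r (m t s)"
  let ?L = "\<lambda>a b c w. tp (br a (br b c)) w - tp (br (br a b) c) w + tp (br (br a c) b) w"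
  have m_add: "m a (b + c) = m a b + m a c" for a b c
    using m module_hom.add[OF bilinear_map_module_hom(2)]
    unfolding left_leibniz_dual_algebra_def by blast
  have m_dual: "m (m a b) c = m a (m b c + m c b)" for a b c
    using m unfolding left_leibniz_dual_algebra_def by blast
  have tp_add: "tp a (w + w') = tp a w + tp a w'" for a w w'
    using module_hom.add[OF bilinear_map_module_hom(2)[OF tp]] .
  have tp_left_add: "tp (a + b) w = tp a w + tp b w"
    and tp_left_diff: "tp (a - b) w = tp a w - tp b w"
    and tp_left_zero: "tp 0 w = 0" for a b w
    using module_hom.add[OF bilinear_map_module_hom(1)[OF tp]]
      module_hom.diff[OF bilinear_map_module_hom(1)[OF tp]]
      module_hom.zero[OF bilinear_map_module_hom(1)[OF tp]] by blast+
  have L_eq_0: "?L a b c w = 0" for a b c w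
  proof -
    have "?L a b c w = tp (br a (br b c) - br (br a b) c + br (br a c) b) w"
      by (simp only: tp_left_add tp_left_diff)
    also have "\<dots> = 0"
      using br by (simp add: right_leibniz_algebra_def tp_left_zero)
    finally show ?thesis .
  qed
  have "right_symmetry_defect circ (tp x r) (tp y s) (tp z t) = ?L x y z ?u - ?L x z y ?v"
    unfolding right_symmetry_defect_def circ m_dual m_add tp_add by (simp add: algebra_simps)
  then show ?thesis
    by (simp only: L_eq_0 diff_self)
qed

theorem mainTheorem17:
  fixes sg :: "'k::field \<Rightarrow> 'g::ab_group_add \<Rightarrow> 'g"
    and sr :: "'k \<Rightarrow> 'r::ab_group_add \<Rightarrow> 'r"
    and st :: "'k \<Rightarrow> 't::ab_group_add \<Rightarrow> 't"
    and br :: "'g \<Rightarrow> 'g \<Rightarrow> 'g"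
    and m :: "'r \<Rightarrow> 'r \<Rightarrow> 'r"
    and tp :: "'g \<Rightarrow> 'r \<Rightarrow> 't"
    and circ :: "'t \<Rightarrow> 't \<Rightarrow> 't"
  assumes "right_leibniz_algebra sg br"
    and "left_leibniz_dual_algebra sr m"
    and "is_tensor_product sg sr st tp"
    and "bilinear_map st st st circ"
    and "\<forall>x r y s. circ (tp x r) (tp y s) = tp (br x y) (m r s)"
  shows "right_symmetric circ"
proof -
  have tp: "bilinear_map sg sr st tp"
    and span: "module.span st (range (\<lambda>(x, y). tp x y)) = UNIV"
    using assms(3) unfolding is_tensor_product_def by blast+
  have "right_symmetry_defect circ X Y Z = 0" for X Y Z
  proof (rule trilinear_map_eq_0_on_span[OF trilinear_map_right_symmetry_defect[OF assms(4)] span])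
    show "right_symmetry_defect circ X' Y' Z' = 0"
      if "X' \<in> range (\<lambda>(x, y). tp x y)" "Y' \<in> range (\<lambda>(x, y). tp x y)"
        "Z' \<in> range (\<lambda>(x, y). tp x y)" for X' Y' Z'
      using that right_symmetry_defect_pure_tensors_eq_0[OF assms(1,2) tp] assms(5) by auto
  qed
  then show ?thesis
    unfolding right_symmetric_iff_defect_eq_0 by blast
qed

end
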